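(* Let $f:M'\twoheadleftarrow M$ be a matroid quotient on a ground set $E$ with $n_f(E)=c$, and let $M'=M_0\overset{\mathcal K_1}{\twoheadleftarrow}M_1\overset{\mathcal K_2}{\twoheadleftarrow}\cdots\overset{\mathcal K_c}{\twoheadleftarrow}M_c=M$ be its Higgs factorization. Then for each $i=1,\dots,c$, \[\mathcal K_i=\{G\in\mathscr L_{M_i} : G\supseteq F \text{ for some } F\in\operatorname{cyc}(f) \text{ with } n_f(F)\ge i\}.\] In particular, the quotient $f$ (i.e. the matroid $M'$) is determined by $M$, the set $\operatorname{cyc}(f)$ of $f$-cyclic flats, and their $f$-nullities.
   Context: $M'$ is a (matroid) quotient of $M$, written $f:M'\twoheadleftarrow M$, if every flat of $M'$ is a flat of $M$. The $f$-nullity of $A\subseteq E$ is $n_f(A)=\operatorname{rk}_M(A)-\operatorname{rk}_{M'}(A)$. An $f$-cyclic flat is a flat $F$ of $M'$ that is minimal under inclusion among flats $F'$ of $M'$ with $n_f(F')=n_f(F)$; $\operatorname{cyc}(f)$ is the set of these. A modular cut $\mathcal K$ of a matroid $N$ is a nonempty upward-closed set of flats such that $F_1,F_2\in\mathcal K$ with $\operatorname{rk}(F_1)+\operatorname{rk}(F_2)=\operatorname{rk}(F_1\cup F_2)+\operatorname{rk}(F_1\cap F_2)$ implies $F_1\cap F_2\in\mathcal K$; it defines an elementary quotient $N'\overset{\mathcal K}{\twoheadleftarrow}N$ whose flats are $\mathcal K$ together with the flats of $N$ not covered by an element of $\mathcal K$. The Higgs factorization of $f$ is the sequence of elementary quotients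 in which $M_i$ ($1\le i\le c$) has bases $\{A\subseteq E: A \text{ spanning in } M',\ \text{independent in } M,\ |A|=\operatorname{rk}(M')+i\}$, and $\mathcal K_i$ is the modular cut of $M_i$ defining the elementary quotient $M_{i-1}$ of $M_i$. *)

theory Defs
  imports Main
begin

definition matroid :: "'a set \<Rightarrow> ('a set \<Rightarrow> bool) \<Rightarrow> bool" where
  "matroid E indep \<longleftrightarrow>
     finite E \<and> indep {} \<and> (\<forall>X. indep X \<longrightarrow> X \<subseteq> E) \<and>
     (\<forall>X Y. indep Y \<and> X \<subseteq> Y \<longrightarrow> indep X) \<and>
     (\<forall>X Y. indep X \<and> indep Y \<and> card X < card Y \<longrightarrow> (\<exists>y\<in>Y - X. indep (insert y X)))"

definition rk :: "('a set \<Rightarrow> bool) \<Rightarrow> 'a set \<Rightarrow> nat" where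
  "rk indep A = Max (card ` {X. X \<subseteq> A \<and> indep X})"

definition flat :: "'a set \<Rightarrow> ('a set \<Rightarrow> bool) \<Rightarrow> 'a set \<Rightarrow> bool" where
  "flat E indep F \<longleftrightarrow> F \<subseteq> E \<and> (\<forall>x\<in>E - F. rk indep (insert x F) > rk indep F)"

definition flats :: "'a set \<Rightarrow> ('a set \<Rightarrow> bool) \<Rightarrow> 'a set set" where
  "flats E indep = {F. flat E indep F}"

definition spanning :: "'a set \<Rightarrow> ('a set \<Rightarrow> bool) \<Rightarrow> 'a set \<Rightarrow> bool" where
  "spanning E indep A \<longleftrightarrow> A \<subseteq> E \<and> rk indep A = rk indep E"

definition quotient :: "'a set \<Rightarrow> ('a set \<Rightarrow> bool) \<Rightarrow> ('a set \<Rightarrow> bool) \<Rightarrow> bool" where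
  "quotient E M' M \<longleftrightarrow> matroid E M \<and> matroid E M' \<and> flats E M' \<subseteq> flats E M"

definition nullity :: "('a set \<Rightarrow> bool) \<Rightarrow> ('a set \<Rightarrow> bool) \<Rightarrow> 'a set \<Rightarrow> int" where
  "nullity M' M A = int (rk M A) - int (rk M' A)"

definition f_cyclic :: "'a set \<Rightarrow> ('a set \<Rightarrow> bool) \<Rightarrow> ('a set \<Rightarrow> bool) \<Rightarrow> 'a set \<Rightarrow> bool" where
  "f_cyclic E M' M F \<longleftrightarrow> flat E M' F \<and>
     (\<forall>F'. flat E M' F' \<and> F' \<subseteq> F \<and> nullity M' M F' = nullity M' M F \<longrightarrow> F' = F)"

definition cyc :: "'a set \<Rightarrow> ('a set \<Rightarrow> bool) \<Rightarrow> ('a set \<Rightarrow> bool) \<Rightarrow> 'a set set" where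
  "cyc E M' M = {F. f_cyclic E M' M F}"

definition modular_cut :: "'a set \<Rightarrow> ('a set \<Rightarrow> bool) \<Rightarrow> 'a set set \<Rightarrow> bool" where
  "modular_cut E N K \<longleftrightarrow> K \<noteq> {} \<and> K \<subseteq> flats E N \<and>
     (\<forall>F\<in>K. \<forall>G. flat E N G \<and> F \<subseteq> G \<longrightarrow> G \<in> K) \<and>
     (\<forall>F1\<in>K. \<forall>F2\<in>K. rk N F1 + rk N F2 = rk N (F1 \<union> F2) + rk N (F1 \<inter> F2) \<longrightarrow> F1 \<inter> F2 \<in> K)"

definition covers :: "'a set \<Rightarrow> ('a set \<Rightarrow> bool) \<Rightarrow> 'a set \<Rightarrow> 'a set \<Rightarrow> bool" where
  "covers E N G F \<longleftrightarrow> flat E N F \<and> flat E N G \<and> F \<subset> G \<and>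
     \<not> (\<exists>H. flat E N H \<and> F \<subset> H \<and> H \<subset> G)"

definition elem_quotient_flats :: "'a set \<Rightarrow> ('a set \<Rightarrow> bool) \<Rightarrow> 'a set set \<Rightarrow> 'a set set" where
  "elem_quotient_flats E N K = K \<union> {F \<in> flats E N. \<not> (\<exists>G\<in>K. covers E N G F)}"

definition higgs :: "'a set \<Rightarrow> ('a set \<Rightarrow> bool) \<Rightarrow> ('a set \<Rightarrow> bool) \<Rightarrow> nat \<Rightarrow> 'a set \<Rightarrow> bool" where
  "higgs E M' M i X = (if i = 0 then M' X else
     (\<exists>B. X \<subseteq> B \<and> spanning E M' B \<and> M B \<and> card B = rk M' E + i))"

end

theory Submission
  imports Defs
begin

text \<open>
  The matroid \<open>M\<^sub>i\<close> of the Higgs factorization has as independent sets the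
  \<open>M\<close>-independent sets of \<open>f\<close>-nullity at most \<open>i\<close>, and rank function
  \<open>min (rk M) (rk M' + i)\<close>. From the rank function one reads off that a set of nullity
  at least \<open>i\<close> is a flat of \<open>M\<^sub>i\<close> iff it is a flat of \<open>M'\<close>, while a set of smaller
  nullity is a flat of \<open>M\<^sub>i\<close> iff it is a flat of \<open>M\<close> all of whose one-element
  extensions have nullity at most \<open>i\<close>. Comparing \<open>M\<^sub>i\<close> with \<open>M\<^sub>i\<^sub>-\<^sub>1\<close> in these terms
  shows that \<open>M\<^sub>i\<^sub>-\<^sub>1\<close> is the elementary quotient of \<open>M\<^sub>i\<close> by the modular cut of
  flats of nullity at least \<open>i\<close>; since every flat of \<open>M'\<close> contains an \<open>f\<close>-cyclic flat
  of the same nullity, this cut is the one described by \<open>cyc(f)\<close>. A modular cut is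
  determined by its elementary quotient, so \<open>\<K>\<^sub>i\<close> is unique. Descending from
  \<open>M\<^sub>c = M\<close>, the flats of every \<open>M\<^sub>i\<close>, and finally \<open>M' = M\<^sub>0\<close>, are therefore
  determined by \<open>M\<close>, \<open>cyc(f)\<close> and the nullities of the cyclic flats.
\<close>

section \<open>Rank, closure and flats of a matroid\<close>

locale matroid_on =
  fixes E :: "'a set" and indep :: "'a set \<Rightarrow> bool"
  assumes matroid: "matroid E indep"
begin

lemma finite_ground: "finite E"
  and indep_empty: "indep {}"
  and indep_subset_ground: "indep X \<Longrightarrow> X \<subseteq> E"
  and indep_subset: "indep Y \<Longrightarrow> X \<subseteq> Y \<Longrightarrow> indep X"
  and indep_augment: "indep X \<Longrightarrow> indep Y \<Longrightarrow> card X < card Y \<Longrightarrow> \<exists>y\<in>Y - X. indep (insert y X)"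
  using matroid unfolding matroid_def by blast+

lemma indep_finite: "indep X \<Longrightarrow> finite X"
  using finite_ground indep_subset_ground finite_subset by blast

lemma finite_indep_subsets: "finite {X. X \<subseteq> A \<and> indep X}"
  by (rule finite_subset[of _ "Pow E"]) (use indep_subset_ground finite_ground in auto)

lemma rank_attained: "\<exists>X. X \<subseteq> A \<and> indep X \<and> card X = rk indep A"
proof -
  have "rk indep A \<in> card ` {X. X \<subseteq> A \<and> indep X}"
    unfolding rk_def using finite_indep_subsets indep_empty by (intro Max_in) auto
  then show ?thesis by force
qed

lemma card_le_rank: "X \<subseteq> A \<Longrightarrow> indep X \<Longrightarrow> card X \<le> rk indep A"
  unfolding rk_def using finite_indep_subsets by (intro Max_ge) auto

lemma rank_mono: "A \<subseteq> B \<Longrightarrow> rk indep A \<le> rk indep B"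
  by (metis card_le_rank order_trans rank_attained)

lemma rank_indep: "indep X \<Longrightarrow> rk indep X = card X"
  by (metis card_le_rank card_mono indep_finite le_antisym order_refl rank_attained)

lemma indep_if_rank_eq_card: "finite X \<Longrightarrow> rk indep X = card X \<Longrightarrow> indep X"
  by (metis card_subset_eq rank_attained)

lemma rank_le_card: "finite A \<Longrightarrow> rk indep A \<le> card A"
  by (metis card_mono rank_attained)

lemma rank_insert_le: "rk indep (insert x A) \<le> Suc (rk indep A)"
proof -
  obtain Y where Y: "Y \<subseteq> insert x A" "indep Y" "card Y = rk indep (insert x A)"
    using rank_attained by blast
  have "card (Y - {x}) \<le> rk indep A"
    using Y by (intro card_le_rank) (auto intro: indep_subset)
  moreover have "card Y \<le> Suc (card (Y - {x}))"
    using indep_finite[OF Y(2)] by (cases "x \<in> Y") (auto simp: card_Diff_singleton_if)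
  ultimately show ?thesis using Y by linarith
qed

lemma indep_extend:
  assumes "indep I" "I \<subseteq> A"
  shows "\<exists>J. I \<subseteq> J \<and> J \<subseteq> A \<and> indep J \<and> card J = rk indep A"
  using assms
proof (induction "rk indep A - card I" arbitrary: I rule: less_induct)
  case less
  show ?case
  proof (cases "card I < rk indep A")
    case True
    obtain X where X: "X \<subseteq> A" "indep X" "card X = rk indep A"
      using rank_attained by blast
    then obtain y where y: "y \<in> X - I" "indep (insert y I)"
      using indep_augment[OF less.prems(1) X(2)] True by auto
    have "card (insert y I) = Suc (card I)"
      using y indep_finite[OF less.prems(1)] by simp
    then have "rk indep A - card (insert y I) < rk indep A - card I"
      using True by simp
    moreover have "insert y I \<subseteq> A"
      using y(1) X(1) less.prems(2) by blast
    ultimately show ?thesis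
      using less.hyps[OF _ y(2)] by blast
  next
    case False
    then show ?thesis
      using card_le_rank[OF less.prems(2,1)] less.prems by (intro exI[of _ I]) auto
  qed
qed

lemma rank_submodular: "rk indep (A \<union> B) + rk indep (A \<inter> B) \<le> rk indep A + rk indep B"
proof -
  obtain I where I: "I \<subseteq> A \<inter> B" "indep I" "card I = rk indep (A \<inter> B)"
    using rank_attained by blast
  obtain J where J: "I \<subseteq> J" "J \<subseteq> A \<union> B" "indep J" "card J = rk indep (A \<union> B)"
    using indep_extend[OF I(2), of "A \<union> B"] I(1) by blast
  have fin: "finite J" using J indep_finite by blast
  have "card (J \<inter> A) \<le> rk indep A" "card (J \<inter> B) \<le> rk indep B"
    using J by (auto intro!: card_le_rank intro: indep_subset)
  moreover have "card I \<le> card (J \<inter> A \<inter> B)"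
    using I J fin by (intro card_mono) auto
  moreover have "card (J \<inter> A) + card (J \<inter> B) = card J + card (J \<inter> A \<inter> B)"
  proof -
    have "J \<inter> A \<union> J \<inter> B = J" "J \<inter> A \<inter> (J \<inter> B) = J \<inter> A \<inter> B"
      using J(2) by auto
    then show ?thesis
      using card_Un_Int[of "J \<inter> A" "J \<inter> B"] fin by simp
  qed
  ultimately show ?thesis using I J by linarith
qed

lemma rank_union_eq_if_insert_eq:
  assumes "finite S" "\<And>y. y \<in> S \<Longrightarrow> rk indep (insert y A) = rk indep A"
  shows "rk indep (A \<union> S) = rk indep A"
  using assms
proof (induction S rule: finite_induct)
  case (insert y S)
  have "rk indep (A \<union> insert y S) + rk indep A
        \<le> rk indep (A \<union> insert y S) + rk indep ((A \<union> S) \<inter> insert y A)"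
    by (intro add_left_mono rank_mono) auto
  also have "\<dots> \<le> rk indep (A \<union> S) + rk indep (insert y A)"
    using rank_submodular[of "A \<union> S" "insert y A"] by (simp add: Un_absorb2 Un_commute Un_left_commute)
  finally show ?case
    using insert rank_mono[of A "A \<union> insert y S"] by (simp add: subset_insertI2)
qed simp

lemma exists_rank_increasing_elem:
  assumes "finite B" "rk indep A < rk indep B"
  obtains y where "y \<in> B - A" "rk indep A < rk indep (insert y A)"
proof -
  have "\<exists>y\<in>B. rk indep (insert y A) \<noteq> rk indep A"
  proof (rule ccontr)
    assume "\<not> ?thesis"
    then have "rk indep (A \<union> B) = rk indep A"
      using assms(1) by (intro rank_union_eq_if_insert_eq) auto
    then show False
      using rank_mono[of B "A \<union> B"] assms(2) by simp
  qed
  then obtain y where "y \<in> B" "rk indep (insert y A) \<noteq> rk indep A"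
    by blast
  moreover from this have "y \<notin> A"
    by (auto simp: insert_absorb)
  ultimately show thesis
    using that rank_mono[OF subset_insertI, of A y] by simp
qed

definition cl :: "'a set \<Rightarrow> 'a set" where
  "cl A = {x \<in> E. rk indep (insert x A) = rk indep A}"

lemma subset_cl: "A \<subseteq> E \<Longrightarrow> A \<subseteq> cl A"
  unfolding cl_def by (auto simp: insert_absorb)

lemma rank_cl: "A \<subseteq> E \<Longrightarrow> rk indep (cl A) = rk indep A"
proof -
  assume "A \<subseteq> E"
  have "finite (cl A)"
    using finite_ground unfolding cl_def by simp
  then have "rk indep (A \<union> cl A) = rk indep A"
    by (rule rank_union_eq_if_insert_eq) (simp add: cl_def)
  moreover have "A \<union> cl A = cl A"
    using subset_cl[OF \<open>A \<subseteq> E\<close>] by blast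
  ultimately show ?thesis
    by simp
qed

lemma flat_subset_ground: "flat E indep F \<Longrightarrow> F \<subseteq> E"
  unfolding flat_def by blast

lemma flat_ground: "flat E indep E"
  unfolding flat_def by blast

lemma mem_flat_if_rank_insert_eq:
  assumes F: "flat E indep F" and "A \<subseteq> F" "x \<in> E" "rk indep (insert x A) = rk indep A"
  shows "x \<in> F"
proof (rule ccontr)
  assume "x \<notin> F"
  then have "F \<union> insert x A = insert x F" "F \<inter> insert x A = A"
    using assms(2) by auto
  then have "rk indep (insert x F) \<le> rk indep F"
    using rank_submodular[of F "insert x A"] assms(4) by simp
  moreover have "rk indep F < rk indep (insert x F)"
    using F \<open>x \<notin> F\<close> \<open>x \<in> E\<close> unfolding flat_def by blast
  ultimately show False
    by simp
qed

lemma cl_subset_flat: "flat E indep F \<Longrightarrow> A \<subseteq> F \<Longrightarrow> cl A \<subseteq> F"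
  using mem_flat_if_rank_insert_eq unfolding cl_def by blast

lemma flat_cl: "A \<subseteq> E \<Longrightarrow> flat E indep (cl A)"
proof -
  assume A: "A \<subseteq> E"
  have "rk indep (cl A) < rk indep (insert x (cl A))" if "x \<in> E - cl A" for x
  proof -
    have "rk indep (insert x A) \<le> rk indep (insert x (cl A))"
      using subset_cl[OF A] by (intro rank_mono) auto
    moreover have "rk indep A < rk indep (insert x A)"
      using that rank_mono[of A "insert x A"] unfolding cl_def by force
    ultimately show ?thesis
      using rank_cl[OF A] by simp
  qed
  then show ?thesis
    unfolding flat_def cl_def by blast
qed

lemma flat_Int: "flat E indep F \<Longrightarrow> flat E indep G \<Longrightarrow> flat E indep (F \<inter> G)"
proof -
  assume F: "flat E indep F" and G: "flat E indep G"
  have "rk indep (F \<inter> G) < rk indep (insert x (F \<inter> G))" if "x \<in> E - F \<inter> G" for x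
  proof -
    have "rk indep (insert x (F \<inter> G)) \<noteq> rk indep (F \<inter> G)"
    proof
      assume "rk indep (insert x (F \<inter> G)) = rk indep (F \<inter> G)"
      then have "x \<in> F" "x \<in> G"
        using mem_flat_if_rank_insert_eq[OF F, of "F \<inter> G" x]
          mem_flat_if_rank_insert_eq[OF G, of "F \<inter> G" x] that by auto
      with that show False
        by blast
    qed
    then show ?thesis
      using rank_mono[OF subset_insertI, of "F \<inter> G" x] by linarith
  qed
  then show ?thesis
    using flat_subset_ground[OF F] unfolding flat_def by blast
qed

lemma rank_flat_psubset:
  assumes "flat E indep F" "flat E indep G" "F \<subset> G"
  shows "rk indep F < rk indep G"
proof -
  obtain x where x: "x \<in> G - F"
    using assms(3) by blast
  moreover have "x \<in> E"
    using x assms(2) flat_subset_ground by blast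
  ultimately have "rk indep F < rk indep (insert x F)"
    using assms(1) unfolding flat_def by blast
  also have "\<dots> \<le> rk indep G"
    using x assms(3) by (intro rank_mono) auto
  finally show ?thesis .
qed

lemma covers_cl_insert:
  assumes F: "flat E indep F" and x: "x \<in> E - F"
  shows "covers E indep (cl (insert x F)) F"
proof -
  have insE: "insert x F \<subseteq> E"
    using x flat_subset_ground[OF F] by blast
  have rank: "rk indep (cl (insert x F)) \<le> Suc (rk indep F)"
    using rank_cl[OF insE] rank_insert_le by simp
  have "F \<subset> cl (insert x F)"
    using subset_cl[OF insE] x by blast
  moreover have "\<not> (\<exists>H. flat E indep H \<and> F \<subset> H \<and> H \<subset> cl (insert x F))"
  proof
    assume "\<exists>H. flat E indep H \<and> F \<subset> H \<and> H \<subset> cl (insert x F)"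
    then obtain H where H: "flat E indep H" "F \<subset> H" "H \<subset> cl (insert x F)"
      by blast
    have "rk indep F < rk indep H" "rk indep H < rk indep (cl (insert x F))"
      using rank_flat_psubset[OF F H(1,2)] rank_flat_psubset[OF H(1) flat_cl[OF insE] H(3)] by auto
    with rank show False
      by linarith
  qed
  ultimately show ?thesis
    unfolding covers_def using F flat_cl[OF insE] by blast
qed

lemma covers_eq_cl_insert:
  assumes cov: "covers E indep H F" and x: "x \<in> H - F"
  shows "H = cl (insert x F)"
proof -
  have H: "flat E indep H" "F \<subset> H"
    using cov unfolding covers_def by auto
  have insE: "insert x F \<subseteq> E"
    using x H flat_subset_ground by blast
  have "cl (insert x F) \<subseteq> H"
    using cl_subset_flat[OF H(1)] x H(2) by blast
  moreover have "\<not> cl (insert x F) \<subset> H"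
  proof -
    have "F \<subset> cl (insert x F)"
      using subset_cl[OF insE] x by blast
    moreover have "\<not> (flat E indep C \<and> F \<subset> C \<and> C \<subset> H)" for C
      using cov unfolding covers_def by blast
    ultimately show ?thesis
      using flat_cl[OF insE] by blast
  qed
  ultimately show ?thesis
    by blast
qed

lemma indep_iff_flats:
  "indep X \<longleftrightarrow> X \<subseteq> E \<and> (\<forall>x\<in>X. \<exists>F. flat E indep F \<and> X - {x} \<subseteq> F \<and> x \<notin> F)"
proof
  assume X: "indep X"
  have "x \<notin> cl (X - {x})" if "x \<in> X" for x
  proof -
    have "rk indep (X - {x}) < rk indep X"
      using X that indep_finite[OF X] rank_indep indep_subset
      by (metis Diff_subset card_Diff1_less)
    then show ?thesis
      using that unfolding cl_def by (simp add: insert_absorb)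
  qed
  moreover have "X \<subseteq> E"
    using X indep_subset_ground by blast
  ultimately show "X \<subseteq> E \<and> (\<forall>x\<in>X. \<exists>F. flat E indep F \<and> X - {x} \<subseteq> F \<and> x \<notin> F)"
    using flat_cl subset_cl by (metis Diff_subset order_trans)
next
  assume X: "X \<subseteq> E \<and> (\<forall>x\<in>X. \<exists>F. flat E indep F \<and> X - {x} \<subseteq> F \<and> x \<notin> F)"
  show "indep X"
  proof (rule ccontr)
    assume "\<not> indep X"
    obtain I where I: "I \<subseteq> X" "indep I" "card I = rk indep X"
      using rank_attained by blast
    moreover have "I \<noteq> X"
      using I(2) \<open>\<not> indep X\<close> by blast
    ultimately obtain x where x: "x \<in> X" "x \<notin> I"
      by blast
    have "card I \<le> rk indep (X - {x})"
      using I x by (intro card_le_rank) auto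
    then have "rk indep (insert x (X - {x})) = rk indep (X - {x})"
      using I x rank_mono[of "X - {x}" X] by (simp add: insert_absorb)
    moreover obtain F where "flat E indep F" "X - {x} \<subseteq> F" "x \<notin> F"
      using X x by blast
    ultimately show False
      using mem_flat_if_rank_insert_eq X x by blast
  qed
qed

end

lemma matroid_eqI_flats:
  assumes "matroid E M1" "matroid E M2" "flats E M1 = flats E M2"
  shows "M1 = M2"
proof
  fix X
  interpret M1: matroid_on E M1 by (rule matroid_on.intro) (fact assms(1))
  interpret M2: matroid_on E M2 by (rule matroid_on.intro) (fact assms(2))
  have "flat E M1 = flat E M2"
    using assms(3) unfolding flats_def by blast
  then show "M1 X = M2 X"
    using M1.indep_iff_flats[of X] M2.indep_iff_flats[of X] by simp
qed

section \<open>Elementary quotients\<close>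

context matroid_on
begin

lemma modular_cut_flat: "modular_cut E indep K \<Longrightarrow> F \<in> K \<Longrightarrow> flat E indep F"
  unfolding modular_cut_def flats_def by blast

lemma modular_cut_upward:
  "modular_cut E indep K \<Longrightarrow> F \<in> K \<Longrightarrow> flat E indep G \<Longrightarrow> F \<subseteq> G \<Longrightarrow> G \<in> K"
  unfolding modular_cut_def by blast

lemma modular_cut_ground_mem: "modular_cut E indep K \<Longrightarrow> E \<in> K"
proof -
  assume K: "modular_cut E indep K"
  then have "K \<noteq> {}"
    unfolding modular_cut_def by blast
  then obtain F where "F \<in> K"
    by blast
  then show "E \<in> K"
    using modular_cut_upward[OF K _ flat_ground] modular_cut_flat[OF K] flat_subset_ground by blast
qed

lemma modular_cut_subset_if_elem_quotient_flats_eq: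
  assumes K1: "modular_cut E indep K1" and K2: "modular_cut E indep K2"
    and eq: "elem_quotient_flats E indep K1 = elem_quotient_flats E indep K2"
  shows "K1 \<subseteq> K2"
proof
  fix G assume "G \<in> K1"
  show "G \<in> K2"
  proof (rule ccontr)
    assume "G \<notin> K2"
    txt \<open>A maximal flat \<open>X \<supseteq> G\<close> outside \<open>K2\<close> is covered by a member of \<open>K2\<close>, so it
      survives in the quotient by \<open>K1\<close> but not in the quotient by \<open>K2\<close>.\<close>
    define S where "S = {X. flat E indep X \<and> G \<subseteq> X \<and> X \<notin> K2}"
    have "S \<subseteq> Pow E"
      unfolding S_def using flat_subset_ground by blast
    then have "finite S"
      using finite_ground by (simp add: finite_subset)
    moreover have "G \<in> S"
      using \<open>G \<in> K1\<close> \<open>G \<notin> K2\<close> modular_cut_flat[OF K1] unfolding S_def by blast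
    ultimately obtain X where X: "X \<in> S" "\<And>Y. Y \<in> S \<Longrightarrow> X \<subseteq> Y \<Longrightarrow> X = Y"
      using finite_has_maximal[of S] by blast
    have XF: "flat E indep X" "G \<subseteq> X" "X \<notin> K2"
      using X(1) unfolding S_def by auto
    have "X \<noteq> E"
      using XF(3) modular_cut_ground_mem[OF K2] by blast
    then obtain x where x: "x \<in> E - X"
      using flat_subset_ground[OF XF(1)] by blast
    define Y where "Y = cl (insert x X)"
    have cov: "covers E indep Y X"
      unfolding Y_def using covers_cl_insert[OF XF(1) x] .
    then have Y: "flat E indep Y" "X \<subset> Y"
      unfolding covers_def by auto
    then have "Y \<notin> S"
      using X(2)[of Y] by blast
    then have "Y \<in> K2"
      using Y XF(2) unfolding S_def by blast
    then have "X \<notin> elem_quotient_flats E indep K2"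
      using cov XF(3) unfolding elem_quotient_flats_def by blast
    moreover have "X \<in> elem_quotient_flats E indep K1"
      using modular_cut_upward[OF K1 \<open>G \<in> K1\<close> XF(1,2)] unfolding elem_quotient_flats_def by blast
    ultimately show False
      using eq by simp
  qed
qed

lemma modular_cut_eq_if_elem_quotient_flats_eq:
  "modular_cut E indep K1 \<Longrightarrow> modular_cut E indep K2 \<Longrightarrow>
    elem_quotient_flats E indep K1 = elem_quotient_flats E indep K2 \<Longrightarrow> K1 = K2"
  by (metis modular_cut_subset_if_elem_quotient_flats_eq subset_antisym)

end

lemma elem_quotient_flats_cong:
  "flats E N1 = flats E N2 \<Longrightarrow> elem_quotient_flats E N1 K = elem_quotient_flats E N2 K"
proof -
  assume "flats E N1 = flats E N2"
  then have "flat E N1 = flat E N2"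
    unfolding flats_def by blast
  then show ?thesis
    unfolding elem_quotient_flats_def flats_def covers_def by simp
qed

section \<open>The Higgs factorization\<close>

lemma higgs_0: "higgs E M' M 0 = M'"
  by (auto simp: higgs_def)

definition higgs_indep :: "('a set \<Rightarrow> bool) \<Rightarrow> ('a set \<Rightarrow> bool) \<Rightarrow> nat \<Rightarrow> 'a set \<Rightarrow> bool" where
  "higgs_indep M' M i X \<longleftrightarrow> M X \<and> card X \<le> rk M' X + i"

locale matroid_quotient =
  fixes E :: "'a set" and M' M :: "'a set \<Rightarrow> bool"
  assumes quotient: "quotient E M' M"
begin

sublocale M: matroid_on E M
  using quotient unfolding quotient_def by unfold_locales blast

sublocale M': matroid_on E M'
  using quotient unfolding quotient_def by unfold_locales blast

lemma quotient_flat_imp_flat: "flat E M' F \<Longrightarrow> flat E M F"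
  using quotient unfolding quotient_def flats_def by blast

lemma quotient_indep_imp_indep: "M' X \<Longrightarrow> M X"
  using M.indep_iff_flats M'.indep_iff_flats quotient_flat_imp_flat by meson

lemma quotient_rank_le: "rk M' A \<le> rk M A"
proof -
  obtain I where "I \<subseteq> A" "M' I" "card I = rk M' A"
    using M'.rank_attained by blast
  then show ?thesis
    using M.card_le_rank quotient_indep_imp_indep by metis
qed

lemma quotient_rank_insert_eq:
  assumes A: "A \<subseteq> E" and x: "x \<in> E" and eq: "rk M (insert x A) = rk M A"
  shows "rk M' (insert x A) = rk M' A"
proof -
  have "flat E M (M'.cl A)"
    using quotient_flat_imp_flat M'.flat_cl[OF A] by blast
  then have "x \<in> M'.cl A"
    using M.mem_flat_if_rank_insert_eq M'.subset_cl[OF A] x eq by blast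
  then show ?thesis
    unfolding M'.cl_def by blast
qed

lemma nullity_insert_mono:
  assumes "A \<subseteq> E" "x \<in> E"
  shows "nullity M' M A \<le> nullity M' M (insert x A)"
proof (cases "rk M (insert x A) = rk M A")
  case True
  then show ?thesis
    using quotient_rank_insert_eq[OF assms] by (simp add: nullity_def)
next
  case False
  then have "rk M (insert x A) = Suc (rk M A)"
    using M.rank_insert_le[of x A] M.rank_mono[OF subset_insertI, of A x] by linarith
  then show ?thesis
    using M'.rank_insert_le[of x A] by (simp add: nullity_def)
qed

lemma nullity_mono:
  assumes "B \<subseteq> E" "A \<subseteq> B"
  shows "nullity M' M A \<le> nullity M' M B"
proof -
  have "nullity M' M A \<le> nullity M' M (A \<union> S)" if "finite S" "S \<subseteq> B" for S
    using that
  proof (induction S rule: finite_induct)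
    case (insert y S)
    then have "nullity M' M (A \<union> S) \<le> nullity M' M (insert y (A \<union> S))"
      using assms by (intro nullity_insert_mono) auto
    with insert show ?case
      by simp
  qed simp
  moreover have "finite (B - A)"
    using assms(1) M.finite_ground finite_subset by blast
  ultimately show ?thesis
    using assms(2) by (metis Diff_partition Diff_subset)
qed

lemma int_le_nullity_iff: "int i \<le> nullity M' M A \<longleftrightarrow> rk M' A + i \<le> rk M A"
  unfolding nullity_def by linarith

lemma nullity_le_int_iff: "nullity M' M A \<le> int i \<longleftrightarrow> rk M A \<le> rk M' A + i"
  unfolding nullity_def by linarith

lemma higgs_indep_iff_nullity_le:
  "higgs_indep M' M i X \<longleftrightarrow> M X \<and> nullity M' M X \<le> int i"
  unfolding higgs_indep_def nullity_le_int_iff by (auto simp: M.rank_indep)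

lemma higgs_indep_augment:
  assumes X: "higgs_indep M' M i X" and Y: "higgs_indep M' M i Y" and lt: "card X < card Y"
  shows "\<exists>y\<in>Y - X. higgs_indep M' M i (insert y X)"
proof -
  have MX: "M X" and MY: "M Y" and card_Y: "card Y \<le> rk M' Y + i"
    using X Y unfolding higgs_indep_def by auto
  have card_insert: "card (insert y X) = Suc (card X)" if "y \<notin> X" for y
    using that M.indep_finite[OF MX] by simp
  show ?thesis
  proof (cases "card X < rk M' X + i")
    case True
    obtain y where y: "y \<in> Y - X" "M (insert y X)"
      using M.indep_augment[OF MX MY lt] by blast
    have "rk M' X \<le> rk M' (insert y X)"
      by (rule M'.rank_mono) blast
    then have "card (insert y X) \<le> rk M' (insert y X) + i"
      using True card_insert y(1) by simp
    then show ?thesis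
      using y unfolding higgs_indep_def by blast
  next
    case False
    txt \<open>\<open>X\<close> is saturated, so it must grow by an element raising its \<open>M'\<close>-rank; by the
      quotient property such an element raises the \<open>M\<close>-rank as well.\<close>
    then have card_X: "card X = rk M' X + i"
      using X unfolding higgs_indep_def by simp
    then have "rk M' X < rk M' Y"
      using card_Y lt by linarith
    then obtain y where y: "y \<in> Y - X" and rank': "rk M' X < rk M' (insert y X)"
      using M'.exists_rank_increasing_elem M.indep_finite[OF MY] by blast
    have "X \<subseteq> E" "y \<in> E"
      using M.indep_subset_ground MX MY y by auto
    then have "rk M (insert y X) \<noteq> rk M X"
      using quotient_rank_insert_eq rank' by fastforce
    then have "rk M (insert y X) = Suc (rk M X)"
      using M.rank_insert_le[of y X] M.rank_mono[OF subset_insertI, of X y] by linarith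
    then have "rk M (insert y X) = card (insert y X)"
      using M.rank_indep[OF MX] card_insert y by simp
    then have "M (insert y X)"
      using M.indep_if_rank_eq_card M.indep_finite[OF MX] by blast
    moreover have "card (insert y X) \<le> rk M' (insert y X) + i"
      using card_X rank' card_insert y by simp
    ultimately show ?thesis
      using y unfolding higgs_indep_def by blast
  qed
qed

lemma matroid_higgs_indep: "matroid E (higgs_indep M' M i)"
  unfolding matroid_def
proof (intro conjI allI impI)
  show "finite E" "higgs_indep M' M i {}"
    using M.finite_ground M.indep_empty by (auto simp: higgs_indep_def)
next
  fix X assume "higgs_indep M' M i X"
  then show "X \<subseteq> E"
    using M.indep_subset_ground unfolding higgs_indep_def by blast
next
  fix X Y assume "higgs_indep M' M i Y \<and> X \<subseteq> Y"
  then show "higgs_indep M' M i X"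
    using M.indep_subset M.indep_subset_ground nullity_mono
    unfolding higgs_indep_iff_nullity_le by (meson order_trans)
qed (use higgs_indep_augment in blast)

sublocale higgs: matroid_on E "higgs_indep M' M i" for i
  by unfold_locales (rule matroid_higgs_indep)

lemma rank_higgs_indep: "rk (higgs_indep M' M i) A = min (rk M A) (rk M' A + i)"
proof (rule antisym)
  obtain X where X: "X \<subseteq> A" "higgs_indep M' M i X" "card X = rk (higgs_indep M' M i) A"
    using higgs.rank_attained by blast
  then have "card X \<le> rk M A"
    using M.card_le_rank unfolding higgs_indep_def by blast
  moreover have "card X \<le> rk M' A + i"
    using X(2) M'.rank_mono[OF X(1)] unfolding higgs_indep_def by linarith
  ultimately show "rk (higgs_indep M' M i) A \<le> min (rk M A) (rk M' A + i)"
    using X(3) by simp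
next
  obtain I where I: "I \<subseteq> A" "M' I" "card I = rk M' A"
    using M'.rank_attained by blast
  obtain J where J: "I \<subseteq> J" "J \<subseteq> A" "M J" "card J = rk M A"
    using M.indep_extend[OF quotient_indep_imp_indep[OF I(2)] I(1)] by blast
  have "card I \<le> min (rk M A) (rk M' A + i)"
    using I(3) quotient_rank_le[of A] by simp
  moreover have "min (rk M A) (rk M' A + i) \<le> card J"
    using J(4) by simp
  ultimately obtain Y where Y: "I \<subseteq> Y" "Y \<subseteq> J" "card Y = min (rk M A) (rk M' A + i)"
    using exists_subset_between[OF _ _ J(1) M.indep_finite[OF J(3)]] by blast
  have "card Y \<le> rk M' Y + i"
    using Y(3) I(3) M'.card_le_rank[OF Y(1) I(2)] by linarith
  then have "higgs_indep M' M i Y"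
    using M.indep_subset[OF J(3) Y(2)] unfolding higgs_indep_def by blast
  moreover have "Y \<subseteq> A"
    using Y(2) J(2) by blast
  ultimately have "card Y \<le> rk (higgs_indep M' M i) A"
    using higgs.card_le_rank by blast
  then show "min (rk M A) (rk M' A + i) \<le> rk (higgs_indep M' M i) A"
    using Y(3) by simp
qed

lemma higgs_indep_0: "higgs_indep M' M 0 = M'"
proof (intro ext iffI)
  fix X assume "higgs_indep M' M 0 X"
  then have "M X" "card X \<le> rk M' X"
    unfolding higgs_indep_def by simp_all
  moreover have "rk M' X \<le> card X"
    using M'.rank_le_card M.indep_finite \<open>M X\<close> by blast
  ultimately show "M' X"
    using M'.indep_if_rank_eq_card M.indep_finite by simp
next
  fix X assume "M' X"
  then show "higgs_indep M' M 0 X"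
    unfolding higgs_indep_def using quotient_indep_imp_indep M'.rank_indep by simp
qed

lemma higgs_indep_nullity_ground:
  assumes "nullity M' M E = int c"
  shows "higgs_indep M' M c = M"
proof (intro ext iffI)
  fix X assume "M X"
  then show "higgs_indep M' M c X"
    using nullity_mono[OF order_refl M.indep_subset_ground] assms
    unfolding higgs_indep_iff_nullity_le by simp
qed (simp add: higgs_indep_def)

lemma higgs_eq_higgs_indep:
  assumes i: "int i \<le> nullity M' M E"
  shows "higgs E M' M i = higgs_indep M' M i"
proof (cases "i = 0")
  case True
  then show ?thesis
    using higgs_0 higgs_indep_0 by simp
next
  case False
  have rank_E: "rk (higgs_indep M' M i) E = rk M' E + i"
    using rank_higgs_indep[of i E] i int_le_nullity_iff by simp
  have "(\<exists>B. X \<subseteq> B \<and> spanning E M' B \<and> M B \<and> card B = rk M' E + i) \<longleftrightarrow> higgs_indep M' M i X"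
    for X
  proof
    assume "\<exists>B. X \<subseteq> B \<and> spanning E M' B \<and> M B \<and> card B = rk M' E + i"
    then obtain B where B: "X \<subseteq> B" "spanning E M' B" "M B" "card B = rk M' E + i"
      by blast
    then have "higgs_indep M' M i B"
      unfolding spanning_def higgs_indep_def by simp
    then show "higgs_indep M' M i X"
      using higgs.indep_subset B(1) by blast
  next
    assume "higgs_indep M' M i X"
    then obtain B where B: "X \<subseteq> B" "B \<subseteq> E" "higgs_indep M' M i B" "card B = rk M' E + i"
      using higgs.indep_extend[of i X E] higgs.indep_subset_ground rank_E by auto
    then have "spanning E M' B"
      using M'.rank_mono[OF B(2)] unfolding spanning_def higgs_indep_def by simp
    then show "\<exists>B. X \<subseteq> B \<and> spanning E M' B \<and> M B \<and> card B = rk M' E + i"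
      using B unfolding higgs_indep_def by blast
  qed
  then show ?thesis
    using False by (auto simp: higgs_def)
qed

lemma rank_higgs_indep_if_nullity_ge:
  "int i \<le> nullity M' M A \<Longrightarrow> rk (higgs_indep M' M i) A = rk M' A + i"
  unfolding rank_higgs_indep int_le_nullity_iff by simp

lemma flat_higgs_indep_iff_quotient_flat:
  assumes "int i \<le> nullity M' M G"
  shows "flat E (higgs_indep M' M i) G \<longleftrightarrow> flat E M' G"
proof
  assume G: "flat E (higgs_indep M' M i) G"
  have "rk M' G < rk M' (insert x G)" if "x \<in> E - G" for x
  proof -
    have "rk (higgs_indep M' M i) G < rk (higgs_indep M' M i) (insert x G)"
      using G that unfolding flat_def by blast
    then show ?thesis
      using rank_higgs_indep_if_nullity_ge[OF assms] unfolding rank_higgs_indep[of i "insert x G"]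
      by linarith
  qed
  then show "flat E M' G"
    using G unfolding flat_def by blast
next
  assume G: "flat E M' G"
  have "rk (higgs_indep M' M i) G < rk (higgs_indep M' M i) (insert x G)" if "x \<in> E - G" for x
  proof -
    have "rk M' G < rk M' (insert x G)" "rk M G < rk M (insert x G)"
      using G quotient_flat_imp_flat[OF G] that unfolding flat_def by blast+
    then show ?thesis
      using assms M'.rank_insert_le[of x G] unfolding rank_higgs_indep int_le_nullity_iff
      by linarith
  qed
  then show "flat E (higgs_indep M' M i) G"
    using G unfolding flat_def by blast
qed

lemma flat_higgs_indep_iff_flat:
  assumes "nullity M' M G \<le> int i"
  shows "flat E (higgs_indep M' M i) G \<longleftrightarrow>
    flat E M G \<and> (\<forall>x\<in>E - G. nullity M' M (insert x G) \<le> int i)"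
proof -
  have "rk (higgs_indep M' M i) G < rk (higgs_indep M' M i) (insert x G) \<longleftrightarrow>
      rk M G < rk M (insert x G) \<and> nullity M' M (insert x G) \<le> int i" for x
    using assms M.rank_insert_le[of x G]
    unfolding rank_higgs_indep nullity_le_int_iff by linarith
  then show ?thesis
    unfolding flat_def by blast
qed

text \<open>The modular cut \<open>\<K>\<^sub>i\<close>, described by nullities instead of cyclic flats.\<close>
definition nullity_cut :: "nat \<Rightarrow> 'a set set" where
  "nullity_cut i = {G \<in> flats E (higgs_indep M' M i). int i \<le> nullity M' M G}"

lemma modular_cut_nullity_cut:
  assumes "int i \<le> nullity M' M E"
  shows "modular_cut E (higgs_indep M' M i) (nullity_cut i)"
  unfolding modular_cut_def
proof (intro conjI ballI allI impI)
  show "nullity_cut i \<noteq> {}"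
    using assms higgs.flat_ground unfolding nullity_cut_def flats_def by blast
  show "nullity_cut i \<subseteq> flats E (higgs_indep M' M i)"
    unfolding nullity_cut_def by blast
next
  fix F G assume "F \<in> nullity_cut i" "flat E (higgs_indep M' M i) G \<and> F \<subseteq> G"
  then show "G \<in> nullity_cut i"
    using nullity_mono[of G F] higgs.flat_subset_ground unfolding nullity_cut_def flats_def
    by fastforce
next
  fix F1 F2 assume F1: "F1 \<in> nullity_cut i" and F2: "F2 \<in> nullity_cut i"
    and modular: "rk (higgs_indep M' M i) F1 + rk (higgs_indep M' M i) F2 =
      rk (higgs_indep M' M i) (F1 \<union> F2) + rk (higgs_indep M' M i) (F1 \<inter> F2)"
  have "rk (higgs_indep M' M i) F1 = rk M' F1 + i" "rk (higgs_indep M' M i) F2 = rk M' F2 + i"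
    using F1 F2 rank_higgs_indep_if_nullity_ge unfolding nullity_cut_def by auto
  then have "rk M' (F1 \<inter> F2) + i \<le> rk M (F1 \<inter> F2)"
    using modular M'.rank_submodular[of F1 F2]
      rank_higgs_indep[of i "F1 \<union> F2"] rank_higgs_indep[of i "F1 \<inter> F2"] by linarith
  moreover have "flat E (higgs_indep M' M i) (F1 \<inter> F2)"
    using F1 F2 higgs.flat_Int unfolding nullity_cut_def flats_def by blast
  ultimately show "F1 \<inter> F2 \<in> nullity_cut i"
    unfolding nullity_cut_def flats_def int_le_nullity_iff by blast
qed

lemma covered_by_nullity_cut_iff:
  assumes G: "flat E (higgs_indep M' M i) G"
  shows "(\<exists>H\<in>nullity_cut i. covers E (higgs_indep M' M i) H G) \<longleftrightarrow>
    (\<exists>x\<in>E - G. int i \<le> nullity M' M (insert x G))"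
proof
  assume "\<exists>H\<in>nullity_cut i. covers E (higgs_indep M' M i) H G"
  then obtain H where H: "H \<in> nullity_cut i" "covers E (higgs_indep M' M i) H G"
    by blast
  have "G \<subset> H" "flat E (higgs_indep M' M i) H"
    using H(2) by (simp_all add: covers_def)
  then obtain x where x: "x \<in> H - G"
    by blast
  have "insert x G \<subseteq> H"
    using \<open>G \<subset> H\<close> x by blast
  moreover have "H \<subseteq> E"
    using higgs.flat_subset_ground \<open>flat E (higgs_indep M' M i) H\<close> by blast
  ultimately have insE: "insert x G \<subseteq> E"
    by blast
  have "rk (higgs_indep M' M i) (insert x G) = rk (higgs_indep M' M i) H"
    using higgs.covers_eq_cl_insert[OF H(2) x] higgs.rank_cl[OF insE] by simp
  also have "\<dots> = rk M' H + i"
    using H(1) rank_higgs_indep_if_nullity_ge unfolding nullity_cut_def by blast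
  finally have "rk (higgs_indep M' M i) (insert x G) = rk M' H + i" .
  moreover have "rk M' (insert x G) \<le> rk M' H"
    using M'.rank_mono \<open>insert x G \<subseteq> H\<close> by blast
  ultimately have "int i \<le> nullity M' M (insert x G)"
    unfolding rank_higgs_indep int_le_nullity_iff by linarith
  moreover have "x \<in> E"
    using insE by blast
  ultimately show "\<exists>x\<in>E - G. int i \<le> nullity M' M (insert x G)"
    using x by blast
next
  assume "\<exists>x\<in>E - G. int i \<le> nullity M' M (insert x G)"
  then obtain x where x: "x \<in> E - G" and nullity_x: "int i \<le> nullity M' M (insert x G)"
    by blast
  have insE: "insert x G \<subseteq> E"
    using x higgs.flat_subset_ground[OF G] by blast
  define H where "H = higgs.cl i (insert x G)"
  have "covers E (higgs_indep M' M i) H G"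
    unfolding H_def using higgs.covers_cl_insert[OF G x] .
  moreover have "H \<in> nullity_cut i"
  proof -
    have "flat E (higgs_indep M' M i) H"
      unfolding H_def using higgs.flat_cl[OF insE] .
    moreover have "nullity M' M (insert x G) \<le> nullity M' M H"
      unfolding H_def
      by (rule nullity_mono[OF higgs.flat_subset_ground[OF higgs.flat_cl[OF insE]] higgs.subset_cl[OF insE]])
    ultimately show ?thesis
      using nullity_x unfolding nullity_cut_def flats_def by simp
  qed
  ultimately show "\<exists>H\<in>nullity_cut i. covers E (higgs_indep M' M i) H G"
    by blast
qed

lemma elem_quotient_flats_nullity_cut:
  assumes "1 \<le> i"
  shows "elem_quotient_flats E (higgs_indep M' M i) (nullity_cut i) = flats E (higgs_indep M' M (i - 1))"
proof (rule set_eqI)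
  fix G
  show "G \<in> elem_quotient_flats E (higgs_indep M' M i) (nullity_cut i) \<longleftrightarrow>
    G \<in> flats E (higgs_indep M' M (i - 1))"
  proof (cases "int i \<le> nullity M' M G")
    case True
    then have "G \<in> elem_quotient_flats E (higgs_indep M' M i) (nullity_cut i) \<longleftrightarrow>
        flat E (higgs_indep M' M i) G"
      unfolding elem_quotient_flats_def nullity_cut_def flats_def by auto
    also have "\<dots> \<longleftrightarrow> flat E (higgs_indep M' M (i - 1)) G"
      using True flat_higgs_indep_iff_quotient_flat[of i G] flat_higgs_indep_iff_quotient_flat[of "i - 1" G]
      by simp
    finally show ?thesis
      unfolding flats_def by simp
  next
    case False
    then have "G \<notin> nullity_cut i"
      unfolding nullity_cut_def by blast
    then have "G \<in> elem_quotient_flats E (higgs_indep M' M i) (nullity_cut i) \<longleftrightarrow>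
        flat E (higgs_indep M' M i) G \<and> \<not> (\<exists>H\<in>nullity_cut i. covers E (higgs_indep M' M i) H G)"
      unfolding elem_quotient_flats_def flats_def by blast
    also have "\<dots> \<longleftrightarrow>
        flat E (higgs_indep M' M i) G \<and> (\<forall>x\<in>E - G. nullity M' M (insert x G) < int i)"
      using covered_by_nullity_cut_iff[of i G] by (cases "flat E (higgs_indep M' M i) G") (simp_all add: not_le)
    also have "\<dots> \<longleftrightarrow> flat E M G \<and> (\<forall>x\<in>E - G. nullity M' M (insert x G) \<le> int (i - 1))"
    proof -
      have "flat E (higgs_indep M' M i) G \<longleftrightarrow>
          flat E M G \<and> (\<forall>x\<in>E - G. nullity M' M (insert x G) \<le> int i)"
        using False by (intro flat_higgs_indep_iff_flat) simp
      moreover have "n < int i \<longleftrightarrow> n \<le> int (i - 1)" for n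
        using assms by linarith
      ultimately show ?thesis
        by (metis less_imp_le)
    qed
    also have "\<dots> \<longleftrightarrow> flat E (higgs_indep M' M (i - 1)) G"
      using False assms flat_higgs_indep_iff_flat[of G "i - 1"] by simp
    finally show ?thesis
      unfolding flats_def by simp
  qed
qed

subsection \<open>Cyclic flats\<close>

lemma nullity_nonneg: "0 \<le> nullity M' M A"
  using quotient_rank_le by (simp add: nullity_def)

lemma finite_cyc: "finite (cyc E M' M)"
proof (rule finite_subset)
  show "cyc E M' M \<subseteq> Pow E"
    unfolding cyc_def f_cyclic_def using M'.flat_subset_ground by blast
qed (simp add: M.finite_ground)

lemma exists_cyclic_flat_subset:
  assumes G: "flat E M' G"
  obtains F where "F \<in> cyc E M' M" "F \<subseteq> G" "nullity M' M F = nullity M' M G"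
proof -
  define S where "S = {F. flat E M' F \<and> F \<subseteq> G \<and> nullity M' M F = nullity M' M G}"
  have "finite S"
    using M'.flat_subset_ground[OF G] M.finite_ground
    by (intro finite_subset[of S "Pow G"]) (auto simp: S_def finite_subset)
  moreover have "G \<in> S"
    using G unfolding S_def by blast
  ultimately obtain F where F: "F \<in> S" "\<And>F'. F' \<in> S \<Longrightarrow> F' \<subseteq> F \<Longrightarrow> F = F'"
    using finite_has_minimal2[of S G] by blast
  then have "F \<in> cyc E M' M"
    unfolding cyc_def f_cyclic_def S_def by fastforce
  with F(1) show thesis
    using that unfolding S_def by blast
qed

lemma nullity_cut_eq_cyc:
  "nullity_cut i =
    {G \<in> flats E (higgs_indep M' M i). \<exists>F\<in>cyc E M' M. F \<subseteq> G \<and> int i \<le> nullity M' M F}"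
  (is "_ = ?K")
proof (intro equalityI subsetI)
  fix G assume "G \<in> nullity_cut i"
  then have G: "flat E (higgs_indep M' M i) G" "int i \<le> nullity M' M G"
    unfolding nullity_cut_def flats_def by auto
  then obtain F where "F \<in> cyc E M' M" "F \<subseteq> G" "nullity M' M F = nullity M' M G"
    using exists_cyclic_flat_subset flat_higgs_indep_iff_quotient_flat by metis
  then show "G \<in> ?K"
    using G unfolding flats_def by auto
next
  fix G assume "G \<in> ?K"
  then obtain F where G: "flat E (higgs_indep M' M i) G" and F: "F \<subseteq> G" "int i \<le> nullity M' M F"
    unfolding flats_def by blast
  have "nullity M' M F \<le> nullity M' M G"
    by (rule nullity_mono[OF higgs.flat_subset_ground[OF G] F(1)])
  then show "G \<in> nullity_cut i"
    using G F unfolding nullity_cut_def flats_def by simp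
qed

lemma nullity_ground_eq_Max_cyc: "nullity M' M E = Max (nullity M' M ` cyc E M' M)"
proof -
  obtain F where "F \<in> cyc E M' M" "nullity M' M F = nullity M' M E"
    using exists_cyclic_flat_subset[OF M'.flat_ground] by blast
  then have "nullity M' M E \<in> nullity M' M ` cyc E M' M"
    by (metis image_eqI)
  moreover have "nullity M' M F \<le> nullity M' M E" if "F \<in> cyc E M' M" for F
  proof -
    have "F \<subseteq> E"
      using that M'.flat_subset_ground unfolding cyc_def f_cyclic_def by blast
    then show ?thesis
      by (rule nullity_mono[OF order_refl])
  qed
  ultimately show ?thesis
    using finite_cyc by (intro Max_eqI[symmetric]) auto
qed

lemma higgs_nullity_ground: "nullity M' M E = int c \<Longrightarrow> higgs E M' M c = M"
  using higgs_eq_higgs_indep higgs_indep_nullity_ground by simp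

lemma higgs_modular_cut_iff:
  assumes "1 \<le> i" "int i \<le> nullity M' M E"
  shows "(modular_cut E (higgs E M' M i) K \<and>
      elem_quotient_flats E (higgs E M' M i) K = flats E (higgs E M' M (i - 1)))
    \<longleftrightarrow> K = {G \<in> flats E (higgs E M' M i). \<exists>F\<in>cyc E M' M. F \<subseteq> G \<and> nullity M' M F \<ge> int i}"
proof -
  have higgs: "higgs E M' M i = higgs_indep M' M i" "higgs E M' M (i - 1) = higgs_indep M' M (i - 1)"
    using assms higgs_eq_higgs_indep by simp_all
  note cut = modular_cut_nullity_cut[OF assms(2)] elem_quotient_flats_nullity_cut[OF assms(1)]
  show ?thesis
    unfolding higgs nullity_cut_eq_cyc[symmetric]
    using cut higgs.modular_cut_eq_if_elem_quotient_flats_eq[of i K "nullity_cut i"] by auto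
qed

lemma flats_higgs_eq_elem_quotient_flats:
  assumes "int (Suc i) \<le> nullity M' M E"
  shows "flats E (higgs E M' M i) = elem_quotient_flats E (higgs E M' M (Suc i))
    {G \<in> flats E (higgs E M' M (Suc i)). \<exists>F\<in>cyc E M' M. F \<subseteq> G \<and> nullity M' M F \<ge> int (Suc i)}"
proof -
  have "1 \<le> Suc i"
    by simp
  from iffD2[OF higgs_modular_cut_iff[OF this assms] refl] show ?thesis
    by simp
qed

end

lemma quotient_eq_if_cyc_eq:
  assumes Q': "quotient E M' M" and Q'': "quotient E M'' M"
    and cyc: "cyc E M'' M = cyc E M' M"
    and nullity: "\<forall>F\<in>cyc E M' M. nullity M'' M F = nullity M' M F"
  shows "M'' = M'"
proof -
  interpret Q': matroid_quotient E M' M by (rule matroid_quotient.intro) (fact Q')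
  interpret Q'': matroid_quotient E M'' M by (rule matroid_quotient.intro) (fact Q'')
  define c where "c = nat (nullity M' M E)"
  have c': "nullity M' M E = int c"
    unfolding c_def using Q'.nullity_nonneg by simp
  have "nullity M'' M ` cyc E M'' M = nullity M' M ` cyc E M' M"
    using cyc nullity by simp
  then have c'': "nullity M'' M E = int c"
    using Q'.nullity_ground_eq_Max_cyc Q''.nullity_ground_eq_Max_cyc c' by simp
  have "flats E (higgs E M'' M i) = flats E (higgs E M' M i)" if "i \<le> c" for i
    using that
  proof (induction rule: inc_induct)
    case base
    then show ?case
      using Q'.higgs_nullity_ground[OF c'] Q''.higgs_nullity_ground[OF c''] by simp
  next
    case (step i)
    let ?K = "\<lambda>N. {G \<in> flats E (higgs E N M (Suc i)). \<exists>F\<in>cyc E N M. F \<subseteq> G \<and> nullity N M F \<ge> int (Suc i)}"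
    have "flats E (higgs E M'' M i) = elem_quotient_flats E (higgs E M'' M (Suc i)) (?K M'')"
      using Q''.flats_higgs_eq_elem_quotient_flats step.hyps c'' by simp
    also have "?K M'' = ?K M'"
      using step.IH cyc nullity by auto
    also have "elem_quotient_flats E (higgs E M'' M (Suc i)) (?K M') =
        elem_quotient_flats E (higgs E M' M (Suc i)) (?K M')"
      by (rule elem_quotient_flats_cong[OF step.IH])
    also have "\<dots> = flats E (higgs E M' M i)"
      using Q'.flats_higgs_eq_elem_quotient_flats step.hyps c' by simp
    finally show ?case .
  qed
  then have "flats E M'' = flats E M'"
    using higgs_0[of E M'' M] higgs_0[of E M' M] by (metis le0)
  then show ?thesis
    using matroid_eqI_flats Q'.M'.matroid Q''.M'.matroid by blast
qed

theorem proposition3p23: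
  fixes E :: "'a set" and M' M :: "'a set \<Rightarrow> bool" and c :: nat
  assumes "quotient E M' M"
    and "nullity M' M E = int c"
  shows "(\<forall>i K. 1 \<le> i \<and> i \<le> c \<longrightarrow>
            ((modular_cut E (higgs E M' M i) K \<and>
              elem_quotient_flats E (higgs E M' M i) K = flats E (higgs E M' M (i - 1)))
             \<longleftrightarrow> K = {G \<in> flats E (higgs E M' M i).
                      \<exists>F\<in>cyc E M' M. F \<subseteq> G \<and> nullity M' M F \<ge> int i}))
       \<and> (\<forall>M''. quotient E M'' M \<and> cyc E M'' M = cyc E M' M \<and>
                (\<forall>F\<in>cyc E M' M. nullity M'' M F = nullity M' M F) \<longrightarrow> M'' = M')"
proof -
  interpret matroid_quotient E M' M
    by (rule matroid_quotient.intro) (fact assms(1))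
  show ?thesis
    using higgs_modular_cut_iff assms quotient_eq_if_cyc_eq by auto
qed

end
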